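(* Suppose that for every $m\ge 1$, any $2m$ mass distributions in $\mathbb{R}^2$ can be simultaneously bisected by an arrangement of $m$ lines. Then for every $n\ge 1$ and any $n$ valuation functions $v_1,\ldots,v_n$ on $[0,1]$, there exist at most $n$ cut points partitioning $[0,1]$ into at most $n+1$ intervals, each labeled "$+$" or "$-$" with consecutive intervals receiving different labels, such that $v_i(\mathcal{I}^+)=v_i(\mathcal{I}^-)$ for all $i$, where $\mathcal{I}^{\pm}$ is the union of the intervals labeled "$\pm$".
   Context: A mass distribution $\mu$ on $\mathbb{R}^d$ is a measure on $\mathbb{R}^d$ such that all open sets are measurable, $0<\mu(\mathbb{R}^d)<\infty$, and $\mu(S)=0$ for every subset $S$ contained in a lower-dimensional affine subspace (for $d=1$: every point has measure zero). A valuation function on $[0,1]$ is such a mass distribution supported on $[0,1]$. For an arrangement $A=(\ell_1,\ldots,\ell_m)$ of oriented lines in $\mathbb{R}^2$, let $R_i^+$ be the open positive side of $\ell_i$; $R^+(A)$ (resp. $R^-(A)$) is the set of points not on any $\ell_i$ lying in an even (resp. odd) number of the $R_i^+$. $A$ bisects a mass distribution $\mu$ if $\mu(R^+(A))=\mu(R^-(A))$. *)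

theory Defs
  imports "HOL-Analysis.Analysis"
begin

text \<open>For the real line this says that points have measure zero.\<close>
definition mass_distribution :: "'a::euclidean_space measure \<Rightarrow> bool" where
  "mass_distribution \<mu> \<longleftrightarrow>
     space \<mu> = UNIV \<and>
     (\<forall>S. open S \<longrightarrow> S \<in> sets \<mu>) \<and>
     0 < emeasure \<mu> UNIV \<and> emeasure \<mu> UNIV < \<infinity> \<and>
     (\<forall>A. affine A \<and> aff_dim A < int DIM('a) \<longrightarrow> emeasure \<mu> A = 0)"

definition valuation_function :: "real measure \<Rightarrow> bool" where
  "valuation_function v \<longleftrightarrow> mass_distribution v \<and> emeasure v (- {0..1}) = 0"

text \<open>An oriented line in the plane is a pair (w, c) with w nonzero; the line is
{x. w \<bullet> x = c} and its open positive side is {x. w \<bullet> x > c}.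
An arrangement is a list of oriented lines.\<close>
definition oriented_line :: "(real^2) \<times> real \<Rightarrow> bool" where
  "oriented_line l \<longleftrightarrow> fst l \<noteq> 0"

definition off_lines :: "((real^2) \<times> real) list \<Rightarrow> (real^2) set" where
  "off_lines A = {x. \<forall>i<length A. fst (A!i) \<bullet> x \<noteq> snd (A!i)}"

definition pos_count :: "((real^2) \<times> real) list \<Rightarrow> real^2 \<Rightarrow> nat" where
  "pos_count A x = card {i. i < length A \<and> fst (A!i) \<bullet> x > snd (A!i)}"

definition R_plus :: "((real^2) \<times> real) list \<Rightarrow> (real^2) set" where
  "R_plus A = {x \<in> off_lines A. even (pos_count A x)}"

definition R_minus :: "((real^2) \<times> real) list \<Rightarrow> (real^2) set" where
  "R_minus A = {x \<in> off_lines A. odd (pos_count A x)}"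

definition bisects :: "((real^2) \<times> real) list \<Rightarrow> (real^2) measure \<Rightarrow> bool" where
  "bisects A \<mu> \<longleftrightarrow> emeasure \<mu> (R_plus A) = emeasure \<mu> (R_minus A)"

end

theory Submission
  imports Defs "HOL-Computational_Algebra.Polynomial"
begin

text \<open>Lift each valuation to the plane along the moment curve \<open>t \<mapsto> (t, t\<^sup>2)\<close>, and add \<open>n\<close>
auxiliary masses, the uniform measures on \<open>[j+1, j+2]\<close> for \<open>j < n\<close>. An arrangement of \<open>n\<close>
lines bisecting all \<open>2n\<close> lifted masses meets the curve in at most \<open>2n\<close> parameters, since a line
meets a parabola at most twice; bisecting an auxiliary mass forces a crossing inside its interval,
so at most \<open>n\<close> crossings lie in \<open>(0, 1)\<close>. Between consecutive crossings the curve stays in one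
region, so the parity of the number of positive sides is constant there. Cutting \<open>[0, 1]\<close> at the
crossings and merging neighbouring pieces of equal parity yields at most \<open>n\<close> cuts with
alternating labels, and bisection of a lifted valuation says exactly that both label classes
carry the same mass.\<close>

lemma sets_borel_subset_mass_distribution:
  assumes "mass_distribution \<mu>"
  shows "sets borel \<subseteq> sets \<mu>"
proof -
  have "space \<mu> = UNIV" "\<forall>S. open S \<longrightarrow> S \<in> sets \<mu>"
    using assms by (auto simp: mass_distribution_def)
  then show ?thesis
    unfolding sets_borel by (metis mem_Collect_eq sets.sigma_sets_subset subsetI)
qed

lemma measurable_mass_distribution_borel:
  assumes "mass_distribution \<mu>" "f \<in> borel_measurable borel"
  shows "f \<in> borel_measurable \<mu>"
  using assms sets_borel_subset_mass_distribution[OF assms(1)]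
  by (auto simp: measurable_def mass_distribution_def Pi_iff)

lemma finite_null_sets_mass_distribution:
  assumes "mass_distribution \<mu>" "finite F"
  shows "F \<in> null_sets \<mu>"
proof -
  have "emeasure \<mu> {x} = 0" for x
    using assms(1) by (auto simp: mass_distribution_def aff_dim_sing)
  moreover have "F \<in> sets \<mu>" "\<And>x. {x} \<in> sets \<mu>"
    using sets_borel_subset_mass_distribution[OF assms(1)] borel_closed[OF finite_imp_closed[OF assms(2)]]
    by auto
  ultimately show ?thesis
    using emeasure_eq_sum_singleton[OF assms(2), of \<mu>] by auto
qed

lemma mass_distribution_realI:
  fixes \<nu> :: "real measure"
  assumes "space \<nu> = UNIV" "\<forall>S. open S \<longrightarrow> S \<in> sets \<nu>"
    and "0 < emeasure \<nu> UNIV" "emeasure \<nu> UNIV < \<infinity>" "\<forall>x. emeasure \<nu> {x} = 0"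
  shows "mass_distribution \<nu>"
proof -
  have "A = {} \<or> (\<exists>x. A = {x})" if "aff_dim A < int DIM(real)" for A :: "real set"
  proof -
    have "aff_dim A = -1 \<or> aff_dim A = 0" using that aff_dim_geq[of A] by auto
    then show ?thesis using aff_dim_empty[of A] aff_dim_eq_0[of A] by auto
  qed
  then show ?thesis using assms unfolding mass_distribution_def by fastforce
qed

definition moment_curve :: "real \<Rightarrow> real^2" where
  "moment_curve t = vector [t, t^2]"

lemma inner_moment_curve: "w \<bullet> moment_curve t = w$1 * t + w$2 * t^2"
  by (simp add: moment_curve_def inner_vec_def sum_2)

lemma borel_measurable_moment_curve: "moment_curve \<in> borel_measurable borel"
proof -
  have "continuous_on UNIV (\<lambda>t::real. \<chi> i::2. if i = 1 then t else t^2)"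
  proof (rule continuous_on_vec_lambda)
    show "continuous_on UNIV (\<lambda>t::real. if i = 1 then t else t^2)" for i :: 2
      by (cases "i = 1") (simp_all add: continuous_intros)
  qed
  moreover have "moment_curve = (\<lambda>t. \<chi> i. if i = 1 then t else t^2)"
    by (auto simp: moment_curve_def vec_eq_iff forall_2)
  ultimately show ?thesis by (metis borel_measurable_continuous_onI)
qed

lemma hyperplane_meets_moment_curve:
  assumes "w \<noteq> 0"
  shows "finite {t. w \<bullet> moment_curve t = c}" "card {t. w \<bullet> moment_curve t = c} \<le> 2"
proof -
  let ?p = "[:-c, w$1, w$2:]"
  have "?p \<noteq> 0" using assms by (auto simp: vec_eq_iff forall_2)
  moreover have "{t. w \<bullet> moment_curve t = c} = {t. poly ?p t = 0}"
    by (auto simp: inner_moment_curve algebra_simps power2_eq_square)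
  moreover have "degree ?p \<le> 2" by (simp add: degree_pCons_le)
  ultimately show "finite {t. w \<bullet> moment_curve t = c}" "card {t. w \<bullet> moment_curve t = c} \<le> 2"
    using poly_roots_finite card_poly_roots_bound[of ?p] by (metis, fastforce)
qed

lemma mass_distribution_distr_moment_curve:
  fixes \<nu> :: "real measure"
  assumes \<nu>: "mass_distribution \<nu>"
  shows "mass_distribution (distr \<nu> borel moment_curve)"
proof -
  have meas: "moment_curve \<in> borel_measurable \<nu>"
    using measurable_mass_distribution_borel[OF \<nu> borel_measurable_moment_curve] .
  have "emeasure (distr \<nu> borel moment_curve) A = 0" if low: "aff_dim A < int DIM(real^2)" for A
  proof -
    obtain w c where w: "w \<noteq> 0" "A \<subseteq> {x. w \<bullet> x = c}"
      using aff_lowdim_subset_hyperplane[OF low] by blast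
    let ?F = "{t. w \<bullet> moment_curve t = c}"
    have null: "?F \<in> null_sets \<nu>"
      using finite_null_sets_mass_distribution[OF \<nu>] hyperplane_meets_moment_curve[OF w(1)] by blast
    show ?thesis
    proof (cases "A \<in> sets borel")
      case True
      have "emeasure (distr \<nu> borel moment_curve) A = emeasure \<nu> (moment_curve -` A)"
        using emeasure_distr[OF meas True] \<nu> by (simp add: mass_distribution_def)
      also have "\<dots> \<le> emeasure \<nu> ?F"
        using w(2) null by (intro emeasure_mono) auto
      finally show ?thesis using null by (simp add: null_sets_def)
    qed (simp add: emeasure_notin_sets)
  qed
  moreover have "emeasure (distr \<nu> borel moment_curve) UNIV = emeasure \<nu> UNIV"
    using emeasure_distr[OF meas, of UNIV] \<nu> by (simp add: mass_distribution_def)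
  ultimately show ?thesis
    using \<nu> by (auto simp: mass_distribution_def borel_open)
qed

definition curve_crossings :: "((real^2) \<times> real) list \<Rightarrow> real set" where
  "curve_crossings A = {t. \<exists>i<length A. fst (A!i) \<bullet> moment_curve t = snd (A!i)}"

definition curve_parity :: "((real^2) \<times> real) list \<Rightarrow> real \<Rightarrow> bool" where
  "curve_parity A t = even (pos_count A (moment_curve t))"

definition curve_side :: "((real^2) \<times> real) list \<Rightarrow> bool \<Rightarrow> real set" where
  "curve_side A p = {t. t \<notin> curve_crossings A \<and> curve_parity A t = p}"

lemma vimage_moment_curve_R_plus: "moment_curve -` R_plus A = curve_side A True"
  by (auto simp: R_plus_def off_lines_def curve_crossings_def curve_side_def curve_parity_def)

lemma vimage_moment_curve_R_minus: "moment_curve -` R_minus A = curve_side A False"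
  by (auto simp: R_minus_def off_lines_def curve_crossings_def curve_side_def curve_parity_def)

lemma finite_curve_crossings:
  assumes "\<forall>l\<in>set A. oriented_line l"
  shows "finite (curve_crossings A)" "card (curve_crossings A) \<le> 2 * length A"
proof -
  let ?C = "\<lambda>i. {t. fst (A!i) \<bullet> moment_curve t = snd (A!i)}"
  have crossings: "curve_crossings A = (\<Union>i<length A. ?C i)"
    by (auto simp: curve_crossings_def)
  have "finite (?C i)" "card (?C i) \<le> 2" if "i < length A" for i
    using hyperplane_meets_moment_curve assms that nth_mem by (auto simp: oriented_line_def)
  then show "finite (curve_crossings A)" unfolding crossings by blast
  have "card (curve_crossings A) \<le> (\<Sum>i<length A. card (?C i))"
    unfolding crossings by (rule card_UN_le) simp
  also have "\<dots> \<le> (\<Sum>i<length A. 2)"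
    using \<open>\<And>i. i < length A \<Longrightarrow> card (?C i) \<le> 2\<close> by (intro sum_mono) simp
  finally show "card (curve_crossings A) \<le> 2 * length A" by simp
qed

lemma open_off_lines_pos_count: "open {x \<in> off_lines A. P (pos_count A x)}"
proof -
  let ?pos = "\<lambda>x. {i. i < length A \<and> snd (A!i) < fst (A!i) \<bullet> x}"
  let ?cell = "\<lambda>S. \<Inter>i<length A.
    if i \<in> S then {x. snd (A!i) < fst (A!i) \<bullet> x} else {x. fst (A!i) \<bullet> x < snd (A!i)}"
  have cell: "x \<in> ?cell S \<longleftrightarrow> x \<in> off_lines A \<and> ?pos x = S" if "S \<subseteq> {..<length A}" for x S
  proof
    assume "x \<in> ?cell S"
    then have "\<And>i. i < length A \<Longrightarrow> (i \<in> S \<longrightarrow> snd (A!i) < fst (A!i) \<bullet> x) \<and>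
                 (i \<notin> S \<longrightarrow> fst (A!i) \<bullet> x < snd (A!i))"
      by (auto split: if_splits)
    then show "x \<in> off_lines A \<and> ?pos x = S"
      using that by (force simp: off_lines_def)
  next
    assume "x \<in> off_lines A \<and> ?pos x = S"
    then show "x \<in> ?cell S"
      by (auto simp: off_lines_def order_neq_le_trans)
  qed
  have "{x \<in> off_lines A. P (pos_count A x)} = (\<Union>S\<in>{S. S \<subseteq> {..<length A} \<and> P (card S)}. ?cell S)"
    using cell by (auto simp: pos_count_def)
  moreover have "open (?cell S)" for S
    by (intro open_INT) (auto simp: open_halfspace_gt open_halfspace_lt)
  ultimately show ?thesis by auto
qed

lemma sets_borel_R_plus_R_minus: "R_plus A \<in> sets borel" "R_minus A \<in> sets borel"
  using open_off_lines_pos_count[of A even] open_off_lines_pos_count[of A odd]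
  by (auto simp: R_plus_def R_minus_def)

lemma sets_borel_curve_side: "curve_side A p \<in> sets borel"
  using measurable_sets_borel[OF borel_measurable_moment_curve] sets_borel_R_plus_R_minus
  by (metis (full_types) vimage_moment_curve_R_minus vimage_moment_curve_R_plus)

lemma bisects_distr_moment_curve_iff:
  fixes \<nu> :: "real measure"
  assumes \<nu>: "mass_distribution \<nu>"
  shows "bisects A (distr \<nu> borel moment_curve) \<longleftrightarrow>
         emeasure \<nu> (curve_side A True) = emeasure \<nu> (curve_side A False)"
proof -
  have "space \<nu> = UNIV" using \<nu> by (simp add: mass_distribution_def)
  then show ?thesis
    using measurable_mass_distribution_borel[OF \<nu> borel_measurable_moment_curve]
    by (simp add: bisects_def emeasure_distr sets_borel_R_plus_R_minus
        vimage_moment_curve_R_plus vimage_moment_curve_R_minus)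
qed

lemma continuous_on_nonvanishing_sign:
  fixes g :: "real \<Rightarrow> real"
  assumes "continuous_on {s..t} g" "s \<le> t" "\<forall>x\<in>{s..t}. g x \<noteq> 0"
  shows "0 < g s \<longleftrightarrow> 0 < g t"
proof
  assume "0 < g s"
  show "0 < g t"
  proof (rule ccontr)
    assume "\<not> 0 < g t"
    then obtain x where "s \<le> x" "x \<le> t" "g x = 0"
      using IVT2'[of g t 0 s] assms \<open>0 < g s\<close> by force
    then show False using assms by auto
  qed
next
  assume "0 < g t"
  show "0 < g s"
  proof (rule ccontr)
    assume "\<not> 0 < g s"
    then obtain x where "s \<le> x" "x \<le> t" "g x = 0"
      using IVT'[of g s 0 t] assms \<open>0 < g t\<close> by force
    then show False using assms by auto
  qed
qed

lemma curve_parity_constant: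
  assumes "{a<..<b} \<inter> curve_crossings A = {}" "s \<in> {a<..<b}" "t \<in> {a<..<b}"
  shows "curve_parity A s = curve_parity A t"
proof -
  have key: "curve_parity A x = curve_parity A y" if "x \<le> y" and free: "{x..y} \<inter> curve_crossings A = {}" for x y
  proof -
    have "snd (A!i) < fst (A!i) \<bullet> moment_curve x \<longleftrightarrow> snd (A!i) < fst (A!i) \<bullet> moment_curve y"
      if i: "i < length A" for i
    proof -
      let ?g = "\<lambda>u. fst (A!i) \<bullet> moment_curve u - snd (A!i)"
      have "continuous_on {x..y} ?g"
        unfolding inner_moment_curve by (intro continuous_intros)
      moreover have "\<forall>u\<in>{x..y}. ?g u \<noteq> 0"
        using free i by (auto simp: curve_crossings_def)
      ultimately show ?thesis
        using continuous_on_nonvanishing_sign[of x y ?g] \<open>x \<le> y\<close> by simp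
    qed
    then have "{i. i < length A \<and> snd (A!i) < fst (A!i) \<bullet> moment_curve x} =
               {i. i < length A \<and> snd (A!i) < fst (A!i) \<bullet> moment_curve y}"
      by blast
    then show ?thesis by (simp add: curve_parity_def pos_count_def)
  qed
  show ?thesis
  proof (cases "s \<le> t")
    case True
    have "{s..t} \<subseteq> {a<..<b}" using assms(2,3) by auto
    then have "{s..t} \<inter> curve_crossings A = {}" using assms(1) by auto
    then show ?thesis using key[OF True] by simp
  next
    case False
    have "{t..s} \<subseteq> {a<..<b}" using assms(2,3) by auto
    then have "{t..s} \<inter> curve_crossings A = {}" using assms(1) by auto
    then show ?thesis using key[of t s] False by simp
  qed
qed

definition alternating_partition ::
  "real set \<Rightarrow> (real \<Rightarrow> bool) \<Rightarrow> real \<Rightarrow> nat \<Rightarrow> (nat \<Rightarrow> real) \<Rightarrow> (nat \<Rightarrow> bool) \<Rightarrow> bool" where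
  "alternating_partition Z L b k t lab \<longleftrightarrow>
     t 0 = 0 \<and> t (k+1) = b \<and> (\<forall>j\<le>k. t j < t (Suc j)) \<and> (\<forall>j<k. lab j \<noteq> lab (Suc j)) \<and>
     (\<forall>j\<le>k. \<forall>s. t j < s \<and> s < t (Suc j) \<and> s \<notin> Z \<longrightarrow> L s = lab j)"

lemma alternating_partition_single:
  assumes "0 < b" "\<forall>s\<in>{0<..<b}. L s = lam"
  shows "alternating_partition Z L b 0 (\<lambda>j. if j = 0 then 0 else b) (\<lambda>_. lam)"
  using assms by (auto simp: alternating_partition_def)

lemma alternating_partition_append:
  assumes "alternating_partition Z L z k t lab" "z < b" "\<forall>s\<in>{z<..<b}. L s = lam" "lam \<noteq> lab k"
  shows "alternating_partition Z L b (k+1) (t(k+2 := b)) (lab(k+1 := lam))"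
  using assms unfolding alternating_partition_def by (auto simp: le_Suc_eq less_Suc_eq)

lemma alternating_partition_stretch:
  assumes "alternating_partition Z L z k t lab" "z < b" "z \<in> Z" "\<forall>s\<in>{z<..<b}. L s = lab k"
  shows "alternating_partition Z L b k (t(k+1 := b)) lab"
proof -
  have last: "L s = lab k" if "t k < s" "s < b" "s \<notin> Z" for s
  proof (cases "s < z")
    case True
    then show ?thesis using assms(1) that by (auto simp: alternating_partition_def)
  next
    case False
    then have "z < s" using \<open>z \<in> Z\<close> \<open>s \<notin> Z\<close> by (cases "s = z") auto
    then show ?thesis using assms(4) \<open>s < b\<close> by auto
  qed
  show ?thesis
    using assms(1,2) last unfolding alternating_partition_def
    by (auto simp: le_less less_Suc_eq)
qed

lemma alternating_partition_extend:
  assumes part: "alternating_partition Z L z k t lab" and "z < b" "z \<in> Z" "\<forall>s\<in>{z<..<b}. L s = lam"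
  shows "\<exists>k'\<le>Suc k. \<exists>t' lab'. alternating_partition Z L b k' t' lab'"
proof (cases "lam = lab k")
  case True
  then have "alternating_partition Z L b k (t(k+1 := b)) lab"
    using alternating_partition_stretch[OF part] assms(2-4) by simp
  then show ?thesis using le_SucI by blast
next
  case False
  then have "alternating_partition Z L b (k+1) (t(k+2 := b)) (lab(k+1 := lam))"
    using alternating_partition_append[OF part] assms(2,4) by simp
  then show ?thesis by auto
qed

lemma alternating_partition_exists:
  assumes "finite Z" "0 < b"
    and const: "\<And>c d s s'. {c<..<d} \<inter> Z = {} \<Longrightarrow> s \<in> {c<..<d} \<Longrightarrow> s' \<in> {c<..<d} \<Longrightarrow> L s = L s'"
  shows "\<exists>k t lab. k \<le> card (Z \<inter> {0<..<b}) \<and> alternating_partition Z L b k t lab"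
  using \<open>0 < b\<close>
proof (induction "card (Z \<inter> {0<..<b})" arbitrary: b rule: less_induct)
  case less
  show ?case
  proof (cases "Z \<inter> {0<..<b} = {}")
    case True
    then have free: "{0<..<b} \<inter> Z = {}" by blast
    define lam where "lam = L (b/2)"
    have "L s = lam" if "s \<in> {0<..<b}" for s
      unfolding lam_def by (rule const[OF free that]) (use less.prems in simp)
    then have "alternating_partition Z L b 0 (\<lambda>j. if j = 0 then 0 else b) (\<lambda>_. lam)"
      using less.prems by (intro alternating_partition_single) auto
    then show ?thesis by (meson zero_le)
  next
    case False
    define z where "z = Max (Z \<inter> {0<..<b})"
    have fin: "finite (Z \<inter> {0<..<b})" using \<open>finite Z\<close> by simp
    have z_in: "z \<in> Z \<inter> {0<..<b}" and z_max: "\<And>x. x \<in> Z \<inter> {0<..<b} \<Longrightarrow> x \<le> z"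
      unfolding z_def using Max_in[OF fin False] Max_ge[OF fin] by auto
    then have z: "z \<in> Z" "0 < z" "z < b" and above_z: "{z<..<b} \<inter> Z = {}"
      by force+
    have "Z \<inter> {0<..<b} = insert z (Z \<inter> {0<..<z})"
      using z_in z_max by force
    then have card: "card (Z \<inter> {0<..<b}) = Suc (card (Z \<inter> {0<..<z}))"
      using \<open>finite Z\<close> by (simp add: card_insert_disjoint)
    obtain k t lab where k: "k \<le> card (Z \<inter> {0<..<z})" and part: "alternating_partition Z L z k t lab"
      using less.hyps[of z] card z(2) by (metis lessI)
    define lam where "lam = L ((z + b) / 2)"
    have "L s = lam" if "s \<in> {z<..<b}" for s
      unfolding lam_def by (rule const[OF above_z that]) (use z(3) in simp)
    then have "\<forall>s\<in>{z<..<b}. L s = lam" by blast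
    then obtain k' t' lab' where "k' \<le> Suc k" "alternating_partition Z L b k' t' lab'"
      using alternating_partition_extend[OF part z(3,1)] by blast
    then show ?thesis using k card by (metis Suc_le_mono order_trans)
  qed
qed

lemma bracket_in_chain:
  fixes t :: "nat \<Rightarrow> 'a::linorder"
  assumes "t 0 \<le> s" "s \<le> t (Suc k)"
  shows "\<exists>j\<le>k. t j \<le> s \<and> s \<le> t (Suc j)"
  using assms
proof (induction k)
  case (Suc k)
  show ?case
  proof (cases "s \<le> t (Suc k)")
    case True
    then show ?thesis using Suc.IH Suc.prems(1) le_Suc_eq by blast
  next
    case False
    then show ?thesis using Suc.prems(2) by auto
  qed
qed auto

lemma mem_alternating_partition_iff:
  assumes part: "alternating_partition Z L b k t lab"
    and x: "x \<in> {0..b}" "x \<notin> Z" "x \<notin> t ` {..k+1}"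
  shows "x \<in> (\<Union>j\<in>{j. j \<le> k \<and> lab j = p}. {t j..t (Suc j)}) \<longleftrightarrow> L x = p"
proof -
  have label: "L x = lab j" if "j \<le> k" "t j \<le> x" "x \<le> t (Suc j)" for j
  proof -
    have "t j \<noteq> x" "t (Suc j) \<noteq> x" using x(3) that(1) by auto
    then show ?thesis using part that x(2) by (auto simp: alternating_partition_def)
  qed
  have "t 0 \<le> x" "x \<le> t (Suc k)"
    using part x(1) by (simp_all add: alternating_partition_def)
  then obtain j where j: "j \<le> k" "t j \<le> x" "x \<le> t (Suc j)"
    using bracket_in_chain by blast
  show ?thesis
  proof
    assume "x \<in> (\<Union>j\<in>{j. j \<le> k \<and> lab j = p}. {t j..t (Suc j)})"
    then obtain i where "i \<le> k" "lab i = p" "t i \<le> x" "x \<le> t (Suc i)" by auto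
    then show "L x = p" using label by simp
  next
    assume "L x = p"
    then show "x \<in> (\<Union>j\<in>{j. j \<le> k \<and> lab j = p}. {t j..t (Suc j)})"
      using j label[OF j] by auto
  qed
qed

lemma emeasure_alternating_partition:
  assumes v: "valuation_function v" and "finite Z" and part: "alternating_partition Z L 1 k t lab"
    and side: "{s. s \<notin> Z \<and> L s = p} \<in> sets v"
  shows "emeasure v (\<Union>j\<in>{j. j \<le> k \<and> lab j = p}. {t j..t (Suc j)}) = emeasure v {s. s \<notin> Z \<and> L s = p}"
proof (rule emeasure_eq_AE)
  have md: "mass_distribution v" using v by (simp add: valuation_function_def)
  have "Z \<union> t ` {..k+1} \<in> null_sets v"
    using finite_null_sets_mass_distribution[OF md] \<open>finite Z\<close> by simp
  moreover have "- {0..1} \<in> null_sets v"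
  proof (rule null_setsI)
    show "emeasure v (- {0..1}) = 0" using v by (simp add: valuation_function_def)
    have "- {0..1::real} \<in> sets borel" by (intro borel_open) (simp add: open_Compl)
    then show "- {0..1} \<in> sets v" using sets_borel_subset_mass_distribution[OF md] by blast
  qed
  ultimately have null: "(Z \<union> t ` {..k+1}) \<union> - {0..1} \<in> null_sets v" by blast
  have "x \<in> (\<Union>j\<in>{j. j \<le> k \<and> lab j = p}. {t j..t (Suc j)}) \<longleftrightarrow> x \<in> {s. s \<notin> Z \<and> L s = p}"
    if "x \<notin> (Z \<union> t ` {..k+1}) \<union> - {0..1}" for x
    using mem_alternating_partition_iff[OF part, of x p] that by auto
  then show "AE x in v. x \<in> (\<Union>j\<in>{j. j \<le> k \<and> lab j = p}. {t j..t (Suc j)}) \<longleftrightarrow>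
      x \<in> {s. s \<notin> Z \<and> L s = p}"
    by (intro AE_I'[OF null]) blast
  show "(\<Union>j\<in>{j. j \<le> k \<and> lab j = p}. {t j..t (Suc j)}) \<in> sets v"
    using sets_borel_subset_mass_distribution[OF md] by (intro sets.finite_UN) auto
qed (rule side)

definition uniform_mass :: "real \<Rightarrow> real \<Rightarrow> real measure" where
  "uniform_mass a b = density lborel (indicator {a..b})"

lemma space_uniform_mass [simp]: "space (uniform_mass a b) = UNIV"
  and sets_uniform_mass [simp]: "sets (uniform_mass a b) = sets borel"
  by (simp_all add: uniform_mass_def)

lemma emeasure_uniform_mass:
  "X \<in> sets borel \<Longrightarrow> emeasure (uniform_mass a b) X = emeasure lborel ({a..b} \<inter> X)"
  unfolding uniform_mass_def by (intro emeasure_restricted) auto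

lemma mass_distribution_uniform_mass:
  assumes "a < b"
  shows "mass_distribution (uniform_mass a b)"
proof (rule mass_distribution_realI)
  show "0 < emeasure (uniform_mass a b) UNIV" "emeasure (uniform_mass a b) UNIV < \<infinity>"
    using assms by (simp_all add: emeasure_uniform_mass)
  show "\<forall>x. emeasure (uniform_mass a b) {x} = 0"
    by (simp add: emeasure_uniform_mass emeasure_lborel_countable del: Int_insert_right)
qed (simp_all add: borel_open)

lemma bisected_uniform_mass_crossing:
  assumes "a < b" and bisected: "bisects A (distr (uniform_mass a b) borel moment_curve)"
  shows "\<exists>z\<in>curve_crossings A. a < z \<and> z < b"
proof (rule ccontr)
  assume "\<not> ?thesis"
  then have free: "{a<..<b} \<inter> curve_crossings A = {}" by auto
  define lam where "lam = curve_parity A ((a + b) / 2)"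
  have lam: "curve_parity A s = lam" if "s \<in> {a<..<b}" for s
    unfolding lam_def by (rule curve_parity_constant[OF free that]) (use assms(1) in simp)
  have "{a<..<b} \<subseteq> {a..b} \<inter> curve_side A lam"
    using free lam by (auto simp: curve_side_def)
  then have "emeasure lborel {a<..<b} \<le> emeasure (uniform_mass a b) (curve_side A lam)"
    using sets_borel_curve_side[of A lam]
    by (auto simp: emeasure_uniform_mass intro!: emeasure_mono)
  moreover have "0 < emeasure lborel {a<..<b}"
    using assms(1) by simp
  ultimately have positive: "0 < emeasure (uniform_mass a b) (curve_side A lam)"
    by order
  have "{a..b} \<inter> curve_side A (\<not> lam) \<subseteq> {a, b}"
    using lam by (force simp: curve_side_def)
  then have "countable ({a..b} \<inter> curve_side A (\<not> lam))"
    by (rule countable_subset) simp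
  then have "emeasure lborel ({a..b} \<inter> curve_side A (\<not> lam)) = 0"
    by (rule emeasure_lborel_countable)
  then have "emeasure (uniform_mass a b) (curve_side A (\<not> lam)) = 0"
    by (simp add: emeasure_uniform_mass sets_borel_curve_side)
  moreover have "emeasure (uniform_mass a b) (curve_side A True) = emeasure (uniform_mass a b) (curve_side A False)"
    using bisected bisects_distr_moment_curve_iff mass_distribution_uniform_mass[OF assms(1)] by blast
  ultimately show False
    using positive by (cases lam) simp_all
qed

lemma card_Int_unit_interval_le:
  fixes Z :: "real set"
  assumes "finite Z" "card Z \<le> 2 * n" "\<forall>j<n. \<exists>z\<in>Z. real j + 1 < z \<and> z < real j + 2"
  shows "card (Z \<inter> {0<..<1}) \<le> n"
proof -
  obtain f where f: "\<And>j. j < n \<Longrightarrow> f j \<in> Z \<and> real j + 1 < f j \<and> f j < real j + 2"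
    using assms(3) by metis
  have "inj_on f {..<n}"
  proof (rule inj_onI)
    fix i j assume "i \<in> {..<n}" "j \<in> {..<n}" "f i = f j"
    then have "real i + 1 < real j + 2" "real j + 1 < real i + 2" using f[of i] f[of j] by auto
    then show "i = j" by linarith
  qed
  moreover have "f ` {..<n} \<subseteq> Z - {0<..<1}"
    using f by force
  ultimately have "n \<le> card (Z - {0<..<1})"
    using card_inj_on_le \<open>finite Z\<close> by (metis card_lessThan finite_Diff)
  then show ?thesis
    using card_Int_Diff[OF \<open>finite Z\<close>, of "{0<..<1}"] assms(2) by linarith
qed

lemma few_crossings_in_unit_interval:
  assumes lines: "\<forall>l\<in>set A. oriented_line l"
    and bisected: "\<And>j. j < length A \<Longrightarrow> bisects A (distr (uniform_mass (real j + 1) (real j + 2)) borel moment_curve)"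
  shows "card (curve_crossings A \<inter> {0<..<1}) \<le> length A"
proof (rule card_Int_unit_interval_le)
  show "finite (curve_crossings A)" "card (curve_crossings A) \<le> 2 * length A"
    using finite_curve_crossings[OF lines] by auto
  show "\<forall>j<length A. \<exists>z\<in>curve_crossings A. real j + 1 < z \<and> z < real j + 2"
    using bisected_uniform_mass_crossing bisected by simp
qed

lemma bisected_valuation_balanced:
  assumes v: "valuation_function v" and finite: "finite (curve_crossings A)"
    and part: "alternating_partition (curve_crossings A) (curve_parity A) 1 k t lab"
    and bisected: "bisects A (distr v borel moment_curve)"
  shows "emeasure v (\<Union>j\<in>{j. j \<le> k \<and> lab j}. {t j..t (Suc j)}) =
         emeasure v (\<Union>j\<in>{j. j \<le> k \<and> \<not> lab j}. {t j..t (Suc j)})"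
proof -
  have "emeasure v (curve_side A True) = emeasure v (curve_side A False)"
    using bisects_distr_moment_curve_iff bisected v by (simp add: valuation_function_def)
  moreover have "curve_side A p \<in> sets v" for p
    using sets_borel_curve_side sets_borel_subset_mass_distribution v
    by (auto simp: valuation_function_def)
  then have labelled: "emeasure v (\<Union>j\<in>{j. j \<le> k \<and> lab j = p}. {t j..t (Suc j)})
      = emeasure v (curve_side A p)" for p
    unfolding curve_side_def by (rule emeasure_alternating_partition[OF v finite part])
  ultimately show ?thesis
    using labelled[of True] labelled[of False] by simp
qed

theorem lemma2p1:
  assumes ham: "\<forall>m::nat. m \<ge> 1 \<longrightarrow>
      (\<forall>\<mu> :: nat \<Rightarrow> (real^2) measure.
         (\<forall>i<2*m. mass_distribution (\<mu> i)) \<longrightarrow>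
         (\<exists>A. length A = m \<and> (\<forall>l\<in>set A. oriented_line l) \<and>
              (\<forall>i<2*m. bisects A (\<mu> i))))"
    and "n \<ge> 1"
    and "\<forall>i<n. valuation_function (v i)"
  shows "\<exists>k t lab. k \<le> n \<and> t 0 = 0 \<and> t (k+1) = (1::real) \<and>
           (\<forall>j\<le>k. t j < t (Suc j)) \<and>
           (\<forall>j<k. lab j \<noteq> lab (Suc j)) \<and>
           (\<forall>i<n. emeasure (v i) (\<Union>j\<in>{j. j \<le> k \<and> lab j}. {t j..t (Suc j)})
                 = emeasure (v i) (\<Union>j\<in>{j. j \<le> k \<and> \<not> lab j}. {t j..t (Suc j)}))"
proof -
  define \<mu> where "\<mu> i = distr (if i < n then v i else uniform_mass (real (i - n) + 1) (real (i - n) + 2))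
    borel moment_curve" for i
  have "\<forall>i<2*n. mass_distribution (\<mu> i)"
    using assms(3) mass_distribution_uniform_mass
    by (auto simp: \<mu>_def valuation_function_def intro!: mass_distribution_distr_moment_curve)
  then obtain A where "length A = n" and lines: "\<forall>l\<in>set A. oriented_line l"
    and bisected: "\<forall>i<2*n. bisects A (\<mu> i)"
    using ham \<open>n \<ge> 1\<close> by blast
  have finite: "finite (curve_crossings A)"
    using finite_curve_crossings[OF lines] by blast
  have "bisects A (distr (uniform_mass (real j + 1) (real j + 2)) borel moment_curve)" if "j < n" for j
    using bisected[rule_format, of "n + j"] that by (simp add: \<mu>_def)
  then have few_cuts: "card (curve_crossings A \<inter> {0<..<1}) \<le> n"
    using few_crossings_in_unit_interval[OF lines] \<open>length A = n\<close> by simp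
  have "\<exists>k t lab. k \<le> card (curve_crossings A \<inter> {0<..<1}) \<and>
      alternating_partition (curve_crossings A) (curve_parity A) 1 k t lab"
    by (rule alternating_partition_exists[OF finite zero_less_one], rule curve_parity_constant)
  then obtain k t lab where "k \<le> n"
    and part: "alternating_partition (curve_crossings A) (curve_parity A) 1 k t lab"
    using few_cuts by (meson order_trans)
  moreover have "\<forall>i<n. bisects A (distr (v i) borel moment_curve)"
  proof (intro allI impI)
    fix i assume "i < n"
    then show "bisects A (distr (v i) borel moment_curve)"
      using bisected[rule_format, of i] by (simp add: \<mu>_def)
  qed
  ultimately show ?thesis
    using bisected_valuation_balanced[OF _ finite part] assms(3) unfolding alternating_partition_def
    by (intro exI[of _ k] exI[of _ t] exI[of _ lab]) auto
qed

end
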